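(* Let $\Pi_2$ be a PARITY$_2$ program. Then there is a canonical program $\Pi_2'$ with $var(\Pi_2')\subseteq\{x_1,x_2\}$ and $Ans(\Pi_2')=$ PARITY$_2$ $=\{\{x_1\},\{x_2\}\}$, such that $Ans(\Pi_2')$ equals the set of models (subsets of $\{x_1,x_2\}$) of $Comp(\Pi_2')$, and $|\Pi_2'|\le|\Pi_2|$.
   Context: A rule element is one of $\top$, $\bot$, $x$, $not\ x$, $not\ not\ x$, where $x$ is a variable. A (canonical) rule is $H\leftarrow B$ with $H$ a variable or $\bot$ and $B$ a finite set of rule elements; a canonical program is a finite set of rules. For a set of variables $I$: $I\models\top$; $I\not\models\bot$; $I\models x$ iff $I\models not\ not\ x$ iff $x\in I$; $I\models not\ x$ iff $x\notin I$; $I\models B$ iff $I$ satisfies every element of $B$; $I$ is closed under $H\leftarrow B$ if $I\models B$ implies $I\models H$. The reduct $\Pi^I$ replaces $not\ not\ x$ by $\top$ if $x\in I$ else $\bot$, and $not\ x$ by $\top$ if $x\notin I$ else $\bot$; $I$ is an answer set of $\Pi$ if $I$ is the least set closed under all rules of $\Pi^I$; $Ans(\Pi)$ is the set of answer sets; $var(\Pi)$ is the set of variables occurring in $\Pi$; $|\Pi|$ is the number of rules. Strings $w\in\{0,1\}^n$ are identified with $\{x_i:w_i=1\}$; PARITY$_n$ is the set of strings in $\{0,1\}^n$ with an odd number of 1's; a PARITY$_n$ program is a canonical program $\Pi$ with $var(\Pi)=\{x_1,\dots,x_n\}$ and $Ans(\Pi)=$ PARITY$_n$. Completion (over signature $\{x_1,\dots,x_n\}$):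 for a body $B$, $\tilde B$ is the conjunction of its elements with $not$ read as $\neg$. $Comp(\Pi)$ is the conjunction of: for each $x_i$, $x_i\leftrightarrow(\tilde B_1\vee\dots\vee\tilde B_m)$ where $x_i\leftarrow B_1,\dots,x_i\leftarrow B_m$ are all rules with head $x_i$ (empty disjunction $=\bot$); and for each rule $\bot\leftarrow B$, the formula $\neg\tilde B$. *)

theory Defs
  imports Main
begin

text \<open>Variables x_i are represented by their index i :: nat.
  Rule elements: top, bot, x, not x, not not x.\<close>
datatype elem = ETop | EBot | EPos nat | ENot nat | ENotNot nat

text \<open>A rule H <- B: head None stands for bot, Some x for the variable x.\<close>
type_synonym rule = "nat option \<times> elem set"
type_synonym program = "rule set"

definition canonical_program :: "program \<Rightarrow> bool" where
  "canonical_program P \<longleftrightarrow> finite P \<and> (\<forall>r\<in>P. finite (snd r))"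

fun elem_vars :: "elem \<Rightarrow> nat set" where
  "elem_vars ETop = {}" | "elem_vars EBot = {}" | "elem_vars (EPos x) = {x}"
| "elem_vars (ENot x) = {x}" | "elem_vars (ENotNot x) = {x}"

definition head_vars :: "nat option \<Rightarrow> nat set" where
  "head_vars h = (case h of None \<Rightarrow> {} | Some x \<Rightarrow> {x})"

definition var :: "program \<Rightarrow> nat set" where
  "var P = (\<Union>r\<in>P. head_vars (fst r) \<union> (\<Union>e\<in>snd r. elem_vars e))"

fun sat_elem :: "nat set \<Rightarrow> elem \<Rightarrow> bool" where
  "sat_elem I ETop = True" | "sat_elem I EBot = False"
| "sat_elem I (EPos x) = (x \<in> I)" | "sat_elem I (ENot x) = (x \<notin> I)"
| "sat_elem I (ENotNot x) = (x \<in> I)"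

definition sat_body :: "nat set \<Rightarrow> elem set \<Rightarrow> bool" where
  "sat_body I B \<longleftrightarrow> (\<forall>e\<in>B. sat_elem I e)"

definition sat_head :: "nat set \<Rightarrow> nat option \<Rightarrow> bool" where
  "sat_head I h = (case h of None \<Rightarrow> False | Some x \<Rightarrow> x \<in> I)"

definition closed_under :: "nat set \<Rightarrow> rule \<Rightarrow> bool" where
  "closed_under I r \<longleftrightarrow> (sat_body I (snd r) \<longrightarrow> sat_head I (fst r))"

fun reduct_elem :: "nat set \<Rightarrow> elem \<Rightarrow> elem" where
  "reduct_elem I (ENotNot x) = (if x \<in> I then ETop else EBot)"
| "reduct_elem I (ENot x) = (if x \<notin> I then ETop else EBot)"
| "reduct_elem I e = e"

definition reduct :: "program \<Rightarrow> nat set \<Rightarrow> program" where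
  "reduct P I = (\<lambda>(h, B). (h, reduct_elem I ` B)) ` P"

definition answer_set :: "program \<Rightarrow> nat set \<Rightarrow> bool" where
  "answer_set P I \<longleftrightarrow>
     (\<forall>r\<in>reduct P I. closed_under I r) \<and>
     (\<forall>J. (\<forall>r\<in>reduct P I. closed_under J r) \<longrightarrow> I \<subseteq> J)"

definition Ans :: "program \<Rightarrow> nat set set" where
  "Ans P = {I. answer_set P I}"

definition PARITY :: "nat \<Rightarrow> nat set set" where
  "PARITY n = {I. I \<subseteq> {1..n} \<and> odd (card I)}"

definition parity_program :: "nat \<Rightarrow> program \<Rightarrow> bool" where
  "parity_program n P \<longleftrightarrow> canonical_program P \<and> var P = {1..n} \<and> Ans P = PARITY n"

fun cl_elem :: "nat set \<Rightarrow> elem \<Rightarrow> bool" where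
  "cl_elem I ETop = True" | "cl_elem I EBot = False"
| "cl_elem I (EPos x) = (x \<in> I)" | "cl_elem I (ENot x) = (\<not> (x \<in> I))"
| "cl_elem I (ENotNot x) = (\<not> \<not> (x \<in> I))"

definition cl_body :: "nat set \<Rightarrow> elem set \<Rightarrow> bool" where
  "cl_body I B \<longleftrightarrow> (\<forall>e\<in>B. cl_elem I e)"

text \<open>I is a model of Comp(P) over the signature S: completion equivalences for each
  x in S, and negated bodies for each constraint.\<close>
definition comp_model :: "nat set \<Rightarrow> program \<Rightarrow> nat set \<Rightarrow> bool" where
  "comp_model S P I \<longleftrightarrow>
     (\<forall>x\<in>S. (x \<in> I) \<longleftrightarrow> (\<exists>B. (Some x, B) \<in> P \<and> cl_body I B)) \<and>
     (\<forall>B. (None, B) \<in> P \<longrightarrow> \<not> cl_body I B)"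

end

theory Submission
  imports Defs
begin

text \<open>The program x1 \<leftarrow> not x2, x2 \<leftarrow> not x1 has two rules and exactly the
  answer sets {x1} and {x2}, so its answer sets coincide with the models of its completion.
  Any PARITY_2 program has the answer sets {x1} and {x2}; since every atom of an answer set
  is the head of some rule, it contains a rule with head x1 and one with head x2, hence
  at least two rules.\<close>

lemma sat_elem_reduct_mono:
  "I \<subseteq> J \<Longrightarrow> sat_elem I (reduct_elem K e) \<Longrightarrow> sat_elem J (reduct_elem K e)"
  by (cases e) (auto split: if_splits)

text \<open>Removing an atom without defining rule keeps I closed under the (monotone) reduct.\<close>
lemma answer_set_atom_has_rule:
  assumes ans: "answer_set P I" and "x \<in> I"
  shows "\<exists>B. (Some x, B) \<in> P"
proof (rule ccontr)
  assume no_rule: "\<nexists>B. (Some x, B) \<in> P"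
  have "closed_under (I - {x}) (h, reduct_elem I ` B)" if hB: "(h, B) \<in> P" for h B
  proof -
    have "(h, reduct_elem I ` B) \<in> reduct P I" using hB unfolding reduct_def by force
    then have closed: "closed_under I (h, reduct_elem I ` B)"
      using ans unfolding answer_set_def by blast
    have "sat_body (I - {x}) (reduct_elem I ` B) \<Longrightarrow> sat_body I (reduct_elem I ` B)"
      using sat_elem_reduct_mono[of "I - {x}" I] unfolding sat_body_def by blast
    moreover have "h \<noteq> Some x" using no_rule hB by blast
    ultimately show ?thesis
      using closed unfolding closed_under_def sat_head_def by (auto split: option.splits)
  qed
  then have "\<forall>r\<in>reduct P I. closed_under (I - {x}) r" unfolding reduct_def by auto
  then have "I \<subseteq> I - {x}" using ans unfolding answer_set_def by blast
  then show False using \<open>x \<in> I\<close> by blast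
qed

lemma subset_12_cases:
  "(I::nat set) \<subseteq> {1, 2} \<Longrightarrow> I = {} \<or> I = {1} \<or> I = {2} \<or> I = {1, 2}"
  by (cases "1 \<in> I"; cases "2 \<in> I") auto

lemma PARITY_2: "PARITY 2 = {{1}, {2}}"
proof -
  have odd_iff: "I \<subseteq> {1, 2} \<and> odd (card I) \<longleftrightarrow> I \<in> {{1}, {2}}" for I :: "nat set"
  proof (cases "I \<subseteq> {1, 2}")
    case True
    then show ?thesis using subset_12_cases[OF True] by (elim disjE) simp_all
  qed auto
  have "{1::nat..2} = {1, 2}" by auto
  then show ?thesis unfolding PARITY_def by (simp only: odd_iff Collect_mem_eq)
qed

lemma card_parity_program_2_ge:
  assumes "parity_program 2 P"
  shows "2 \<le> card P"
proof -
  have "finite P"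
    using assms unfolding parity_program_def canonical_program_def by blast
  have "Ans P = {{1}, {2}}"
    using assms unfolding parity_program_def PARITY_2 by simp
  then have "{1} \<in> Ans P" "{2} \<in> Ans P" by simp_all
  then have "answer_set P {1}" "answer_set P {2}"
    unfolding Ans_def by simp_all
  then obtain B1 B2 where "(Some 1, B1) \<in> P" "(Some 2, B2) \<in> P"
    using answer_set_atom_has_rule[of P "{1}" 1] answer_set_atom_has_rule[of P "{2}" 2] by auto
  then have "card {(Some (1::nat), B1), (Some 2, B2)} \<le> card P"
    using \<open>finite P\<close> by (intro card_mono) auto
  then show ?thesis by simp
qed

definition even_loop :: program where
  "even_loop = {(Some 1, {ENot 2}), (Some 2, {ENot 1})}"

lemma canonical_even_loop: "canonical_program even_loop"
  unfolding canonical_program_def even_loop_def by auto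

lemma var_even_loop: "var even_loop = {1, 2}"
  unfolding var_def even_loop_def head_vars_def by auto

lemma card_even_loop: "card even_loop = 2"
  unfolding even_loop_def by simp

lemma Ans_even_loop: "Ans even_loop = {{1}, {2}}"
proof -
  have answer_set_iff: "answer_set even_loop I \<longleftrightarrow> I \<in> {{1}, {2}}" for I
  proof (cases "I \<subseteq> {1, 2}")
    case True
    then show ?thesis
      using subset_12_cases[OF True]
      by (elim disjE) (simp_all add: answer_set_def reduct_def even_loop_def closed_under_def
          sat_body_def sat_head_def, blast)
  next
    case False
    then have "\<not> answer_set even_loop I"
      using answer_set_atom_has_rule unfolding even_loop_def by blast
    with False show ?thesis by auto
  qed
  show ?thesis unfolding Ans_def answer_set_iff Collect_mem_eq ..
qed

lemma comp_models_even_loop: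
  "{I. I \<subseteq> {1, 2} \<and> comp_model {1, 2} even_loop I} = {{1}, {2}}"
proof -
  have model_iff: "I \<subseteq> {1, 2} \<and> comp_model {1, 2} even_loop I \<longleftrightarrow> I \<in> {{1}, {2}}" for I
  proof (cases "I \<subseteq> {1, 2}")
    case True
    then show ?thesis
      using subset_12_cases[OF True]
      by (elim disjE) (simp_all add: comp_model_def even_loop_def cl_body_def)
  qed auto
  show ?thesis unfolding model_iff Collect_mem_eq ..
qed

theorem mainTheorem9:
  fixes P2 :: program
  assumes "parity_program 2 P2"
  shows "\<exists>P2'. canonical_program P2' \<and> var P2' \<subseteq> {1, 2} \<and>
           Ans P2' = PARITY 2 \<and> PARITY 2 = {{1}, {2}} \<and>
           Ans P2' = {I. I \<subseteq> {1, 2} \<and> comp_model {1, 2} P2' I} \<and>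
           card P2' \<le> card P2"
proof (intro exI conjI)
  show "canonical_program even_loop" by (rule canonical_even_loop)
  show "var even_loop \<subseteq> {1, 2}" by (simp add: var_even_loop)
  show "Ans even_loop = PARITY 2" "PARITY 2 = {{1}, {2}}"
    by (simp_all add: Ans_even_loop PARITY_2)
  show "Ans even_loop = {I. I \<subseteq> {1, 2} \<and> comp_model {1, 2} even_loop I}"
    by (simp only: Ans_even_loop comp_models_even_loop)
  show "card even_loop \<le> card P2"
    using card_parity_program_2_ge[OF assms] by (simp add: card_even_loop)
qed

end
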